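(* Let $\alpha\ge2$ be an integer, $\Delta\ge3$ an integer, and $\beta_\mu>\beta_\nu\ge\frac{\Delta-2}{\Delta}$ with $\beta:=(\beta_\nu/\beta_\mu)^\alpha\beta_\mu<\frac{\Delta-2}{\Delta}$. For every $\Delta$-regular graph $G=(V,E)$, letting $\nu,\mu$ be the Gibbs distributions of $(G,\beta_\nu)$ and $(G,\beta_\mu)$, $$Z(G,\beta)\ \le\ \frac{Z(G,\beta_\nu)^\alpha}{Z(G,\beta_\mu)^{\alpha-1}}\sum_{\sigma\in\{-1,+1\}^V}\mu(\sigma)\left(\frac{\nu(\sigma)}{\mu(\sigma)}+1\right)^\alpha\ \le\ 3^\alpha Z(G,\beta).$$
   Context: For a graph $G=(V,E)$ and $\gamma>0$, the Ising model $(G,\gamma)$ has Gibbs distribution on $\{-1,+1\}^V$ given by $\pi(\sigma)=\gamma^{m(\sigma)}/Z(G,\gamma)$, where $m(\sigma)=|\{\{u,v\}\in E:\sigma_u=\sigma_v\}|$ and $Z(G,\gamma)=\sum_{\sigma\in\{-1,+1\}^V}\gamma^{m(\sigma)}$. *)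

theory Defs
  imports Complex_Main "HOL-Library.FuncSet"
begin

definition simple_graph :: "'a set \<Rightarrow> 'a set set \<Rightarrow> bool" where
  "simple_graph V E \<longleftrightarrow> finite V \<and> (\<forall>e\<in>E. e \<subseteq> V \<and> card e = 2)"

definition degree :: "'a set set \<Rightarrow> 'a \<Rightarrow> nat" where
  "degree E v = card {e\<in>E. v \<in> e}"

definition regular_graph :: "nat \<Rightarrow> 'a set \<Rightarrow> 'a set set \<Rightarrow> bool" where
  "regular_graph \<Delta> V E \<longleftrightarrow> simple_graph V E \<and> (\<forall>v\<in>V. degree E v = \<Delta>)"

definition spins :: "'a set \<Rightarrow> ('a \<Rightarrow> int) set" where
  "spins V = PiE V (\<lambda>_. {-1, 1})"

definition mono_edges :: "'a set set \<Rightarrow> ('a \<Rightarrow> int) \<Rightarrow> nat" where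
  "mono_edges E \<sigma> = card {e\<in>E. \<exists>u v. e = {u, v} \<and> \<sigma> u = \<sigma> v}"

definition ising_Z :: "'a set \<Rightarrow> 'a set set \<Rightarrow> real \<Rightarrow> real" where
  "ising_Z V E \<gamma> = (\<Sum>\<sigma>\<in>spins V. \<gamma> ^ mono_edges E \<sigma>)"

definition ising_gibbs :: "'a set \<Rightarrow> 'a set set \<Rightarrow> real \<Rightarrow> ('a \<Rightarrow> int) \<Rightarrow> real" where
  "ising_gibbs V E \<gamma> \<sigma> = \<gamma> ^ mono_edges E \<sigma> / ising_Z V E \<gamma>"

end

theory Submission
  imports Defs "HOL-Analysis.Convex"
begin

text \<open>Write \<open>a \<sigma> = \<beta>\<mu>^m(\<sigma>)\<close>, \<open>b \<sigma> = \<beta>\<nu>^m(\<sigma>)\<close> and \<open>t = b / a\<close>. Then \<open>\<beta>^m(\<sigma>) = a \<sigma> * t \<sigma> ^ \<alpha>\<close>, and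
  the middle expression equals \<open>\<Sum>\<sigma>. a \<sigma> * (t \<sigma> + c) ^ \<alpha>\<close> with \<open>c = Z(\<beta>\<nu>) / Z(\<beta>\<mu>)\<close>, the
  \<open>\<mu>\<close>-mean of \<open>t\<close>. The lower bound is \<open>t \<le> t + c\<close>. For the upper bound,
  \<open>(t + c)^\<alpha> \<le> 2^(\<alpha>-1) (t^\<alpha> + c^\<alpha>)\<close>, and Jensen's inequality for the \<open>\<mu>\<close>-mean gives
  \<open>Z(\<beta>\<mu>) c^\<alpha> \<le> \<Sum>\<sigma>. a \<sigma> * t \<sigma> ^ \<alpha> = Z(\<beta>)\<close>; hence the bound \<open>2^\<alpha> Z(\<beta>) \<le> 3^\<alpha> Z(\<beta>)\<close>.
  The conditions involving \<open>\<Delta>\<close> are only needed to make \<open>\<beta>\<nu>\<close> and \<open>\<beta>\<mu>\<close> positive.\<close>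

lemma convex_on_power_nonneg: "convex_on {0::real..} (\<lambda>x. x ^ n)"
  by (cases "even n")
    (auto intro: convex_power_odd convex_on_subset[OF convex_power_even])

lemma power_weighted_sum_le:
  fixes w t :: "'i \<Rightarrow> real"
  assumes "finite S" "0 < n"
    and w: "\<And>i. i \<in> S \<Longrightarrow> 0 \<le> w i" and t: "\<And>i. i \<in> S \<Longrightarrow> 0 \<le> t i"
  shows "(\<Sum>i\<in>S. w i * t i) ^ n \<le> (\<Sum>i\<in>S. w i) ^ (n - 1) * (\<Sum>i\<in>S. w i * t i ^ n)"
proof (cases "sum w S = 0")
  case True
  then have "\<forall>i\<in>S. w i = 0" using sum_nonneg_eq_0_iff[OF \<open>finite S\<close>] w by blast
  then show ?thesis using \<open>0 < n\<close> by (simp add: zero_power)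
next
  case False
  define W where "W = sum w S"
  have "0 < W" using False w sum_nonneg unfolding W_def by (metis order_le_neq_trans)
  have "S \<noteq> {}" using False by auto
  have "(\<Sum>i\<in>S. w i / W * t i) ^ n \<le> (\<Sum>i\<in>S. w i / W * t i ^ n)"
    using convex_on_sum[OF \<open>finite S\<close> \<open>S \<noteq> {}\<close> convex_on_power_nonneg, of "\<lambda>i. w i / W" t]
    using \<open>0 < W\<close> w t by (simp add: W_def flip: sum_divide_distrib)
  then have "W ^ n * (\<Sum>i\<in>S. w i / W * t i) ^ n \<le> W ^ n * (\<Sum>i\<in>S. w i / W * t i ^ n)"
    using \<open>0 < W\<close> by simp
  moreover have "W ^ n * (\<Sum>i\<in>S. w i / W * t i) ^ n = (\<Sum>i\<in>S. w i * t i) ^ n"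
    using \<open>0 < W\<close> by (simp add: sum_distrib_left flip: power_mult_distrib)
  moreover have "W ^ n * (\<Sum>i\<in>S. w i / W * t i ^ n) = W ^ (n - 1) * (\<Sum>i\<in>S. w i * t i ^ n)"
    using \<open>0 < W\<close> \<open>0 < n\<close> by (cases n) (simp_all add: sum_distrib_left)
  ultimately show ?thesis by (simp add: W_def)
qed

lemma power_add_le:
  fixes x y :: real
  assumes "0 \<le> x" "0 \<le> y" "0 < n"
  shows "(x + y) ^ n \<le> 2 ^ (n - 1) * (x ^ n + y ^ n)"
proof -
  have "(\<Sum>i\<in>UNIV. 1 * (if i then x else y)) ^ n
    \<le> (\<Sum>i\<in>(UNIV :: bool set). 1) ^ (n - 1) * (\<Sum>i\<in>UNIV. 1 * (if i then x else y) ^ n)"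
    by (rule power_weighted_sum_le[of UNIV n "\<lambda>_. 1" "\<lambda>i. if i then x else y"]) (use assms in auto)
  then show ?thesis by (simp add: UNIV_bool add.commute)
qed

lemma scaled_ratio_moment_eq:
  fixes a b :: "'s \<Rightarrow> real" and A B :: real
  assumes "0 < n" "A \<noteq> 0" "B \<noteq> 0" and a: "\<And>\<sigma>. \<sigma> \<in> S \<Longrightarrow> a \<sigma> \<noteq> 0"
  shows "B ^ n / A ^ (n - 1) * (\<Sum>\<sigma>\<in>S. a \<sigma> / A * (b \<sigma> / B / (a \<sigma> / A) + 1) ^ n)
    = (\<Sum>\<sigma>\<in>S. a \<sigma> * (b \<sigma> / a \<sigma> + B / A) ^ n)"
  unfolding sum_distrib_left
proof (rule sum.cong[OF refl])
  fix \<sigma> assume "\<sigma> \<in> S"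
  define X where "X = b \<sigma> / a \<sigma> + B / A"
  have ratio: "b \<sigma> / B / (a \<sigma> / A) + 1 = A / B * X"
    using assms(2,3) a[OF \<open>\<sigma> \<in> S\<close>] by (simp add: X_def field_simps)
  have "B ^ n / A ^ (n - 1) * (a \<sigma> / A * (b \<sigma> / B / (a \<sigma> / A) + 1) ^ n)
    = (B ^ n / A ^ (n - 1) * (1 / A) * (A / B) ^ n) * (a \<sigma> * X ^ n)"
    unfolding ratio power_mult_distrib by (simp add: mult_ac)
  also have "B ^ n / A ^ (n - 1) * (1 / A) * (A / B) ^ n = 1"
    using assms(1-3) by (cases n) (simp_all add: power_divide)
  finally show "B ^ n / A ^ (n - 1) * (a \<sigma> / A * (b \<sigma> / B / (a \<sigma> / A) + 1) ^ n)
    = a \<sigma> * (b \<sigma> / a \<sigma> + B / A) ^ n"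
    by (simp add: X_def)
qed

lemma ratio_moment_bounds:
  fixes a b :: "'s \<Rightarrow> real"
  assumes "finite S" "0 < n"
    and a: "\<And>\<sigma>. \<sigma> \<in> S \<Longrightarrow> 0 < a \<sigma>" and b: "\<And>\<sigma>. \<sigma> \<in> S \<Longrightarrow> 0 \<le> b \<sigma>"
  defines "c \<equiv> sum b S / sum a S"
  shows "(\<Sum>\<sigma>\<in>S. a \<sigma> * (b \<sigma> / a \<sigma>) ^ n) \<le> (\<Sum>\<sigma>\<in>S. a \<sigma> * (b \<sigma> / a \<sigma> + c) ^ n)"
    and "(\<Sum>\<sigma>\<in>S. a \<sigma> * (b \<sigma> / a \<sigma> + c) ^ n) \<le> 2 ^ n * (\<Sum>\<sigma>\<in>S. a \<sigma> * (b \<sigma> / a \<sigma>) ^ n)"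
proof -
  have "0 \<le> sum a S" using a by (simp add: sum_nonneg less_imp_le)
  have "0 \<le> c" unfolding c_def using \<open>0 \<le> sum a S\<close> b by (simp add: sum_nonneg)
  have ratio: "0 \<le> b \<sigma> / a \<sigma>" if "\<sigma> \<in> S" for \<sigma> using a b that by (simp add: less_imp_le)
  show "(\<Sum>\<sigma>\<in>S. a \<sigma> * (b \<sigma> / a \<sigma>) ^ n) \<le> (\<Sum>\<sigma>\<in>S. a \<sigma> * (b \<sigma> / a \<sigma> + c) ^ n)"
    using a ratio \<open>0 \<le> c\<close> by (intro sum_mono mult_left_mono power_mono) (auto simp: less_imp_le)
  have jensen: "sum a S * c ^ n \<le> (\<Sum>\<sigma>\<in>S. a \<sigma> * (b \<sigma> / a \<sigma>) ^ n)"
  proof (cases "sum a S = 0")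
    case True
    then show ?thesis using a ratio by (simp add: sum_nonneg less_imp_le)
  next
    case False
    have "(\<Sum>\<sigma>\<in>S. a \<sigma> * (b \<sigma> / a \<sigma>)) ^ n \<le> sum a S ^ (n - 1) * (\<Sum>\<sigma>\<in>S. a \<sigma> * (b \<sigma> / a \<sigma>) ^ n)"
      using \<open>finite S\<close> \<open>0 < n\<close> a ratio by (intro power_weighted_sum_le) (auto simp: less_imp_le)
    moreover have "(\<Sum>\<sigma>\<in>S. a \<sigma> * (b \<sigma> / a \<sigma>)) = sum b S"
      by (intro sum.cong refl) (auto dest!: a)
    moreover have "sum a S * c ^ n = sum b S ^ n / sum a S ^ (n - 1)"
      unfolding c_def using False \<open>0 < n\<close> by (cases n) (simp_all add: power_divide)
    moreover have "0 < sum a S ^ (n - 1)" using False \<open>0 \<le> sum a S\<close> by simp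
    ultimately show ?thesis by (simp add: divide_le_eq mult.commute)
  qed
  have "(\<Sum>\<sigma>\<in>S. a \<sigma> * (b \<sigma> / a \<sigma> + c) ^ n)
      \<le> (\<Sum>\<sigma>\<in>S. a \<sigma> * (2 ^ (n - 1) * ((b \<sigma> / a \<sigma>) ^ n + c ^ n)))"
    using a ratio \<open>0 \<le> c\<close> \<open>0 < n\<close>
    by (intro sum_mono mult_left_mono power_add_le) (auto simp: less_imp_le)
  also have "\<dots> = 2 ^ (n - 1) * ((\<Sum>\<sigma>\<in>S. a \<sigma> * (b \<sigma> / a \<sigma>) ^ n) + sum a S * c ^ n)"
    by (simp add: sum_distrib_left sum_distrib_right sum.distrib algebra_simps)
  also have "\<dots> \<le> 2 ^ (n - 1) * (2 * (\<Sum>\<sigma>\<in>S. a \<sigma> * (b \<sigma> / a \<sigma>) ^ n))"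
    using jensen by simp
  also have "\<dots> = 2 ^ n * (\<Sum>\<sigma>\<in>S. a \<sigma> * (b \<sigma> / a \<sigma>) ^ n)"
    using \<open>0 < n\<close> by (cases n) simp_all
  finally show "(\<Sum>\<sigma>\<in>S. a \<sigma> * (b \<sigma> / a \<sigma> + c) ^ n) \<le> 2 ^ n * (\<Sum>\<sigma>\<in>S. a \<sigma> * (b \<sigma> / a \<sigma>) ^ n)" .
qed

lemma finite_spins: "finite V \<Longrightarrow> finite (spins V)"
  unfolding spins_def by (simp add: finite_PiE)

lemma spins_nonempty: "spins V \<noteq> {}"
  unfolding spins_def by (simp add: PiE_eq_empty_iff)

lemma ising_Z_pos: "finite V \<Longrightarrow> 0 < \<gamma> \<Longrightarrow> 0 < ising_Z V E \<gamma>"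
  unfolding ising_Z_def by (simp add: sum_pos finite_spins spins_nonempty)

lemma ising_scaled_ratio_moment_eq:
  assumes "finite V" "0 < n" "0 < \<gamma>" "0 < \<gamma>'"
  shows "ising_Z V E \<gamma>' ^ n / ising_Z V E \<gamma> ^ (n - 1) *
      (\<Sum>\<sigma>\<in>spins V. ising_gibbs V E \<gamma> \<sigma> * (ising_gibbs V E \<gamma>' \<sigma> / ising_gibbs V E \<gamma> \<sigma> + 1) ^ n)
    = (\<Sum>\<sigma>\<in>spins V. \<gamma> ^ mono_edges E \<sigma> *
        (\<gamma>' ^ mono_edges E \<sigma> / \<gamma> ^ mono_edges E \<sigma> + ising_Z V E \<gamma>' / ising_Z V E \<gamma>) ^ n)"
  unfolding ising_gibbs_def
  by (rule scaled_ratio_moment_eq)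
    (use assms ising_Z_pos[OF \<open>finite V\<close>, of _ E] in \<open>auto simp: less_imp_not_eq2\<close>)

theorem lemma7p4:
  fixes V :: "'a set" and E :: "'a set set"
    and \<alpha> \<Delta> :: nat and \<beta>\<mu> \<beta>\<nu> \<beta> :: real
  assumes "\<alpha> \<ge> 2" and "\<Delta> \<ge> 3"
    and "\<beta>\<mu> > \<beta>\<nu>" and "\<beta>\<nu> \<ge> (real \<Delta> - 2) / real \<Delta>"
    and "\<beta> = (\<beta>\<nu> / \<beta>\<mu>) ^ \<alpha> * \<beta>\<mu>"
    and "\<beta> < (real \<Delta> - 2) / real \<Delta>"
    and "regular_graph \<Delta> V E"
  shows "ising_Z V E \<beta>
           \<le> ising_Z V E \<beta>\<nu> ^ \<alpha> / ising_Z V E \<beta>\<mu> ^ (\<alpha> - 1) *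
              (\<Sum>\<sigma>\<in>spins V. ising_gibbs V E \<beta>\<mu> \<sigma> *
                 (ising_gibbs V E \<beta>\<nu> \<sigma> / ising_gibbs V E \<beta>\<mu> \<sigma> + 1) ^ \<alpha>)
       \<and> ising_Z V E \<beta>\<nu> ^ \<alpha> / ising_Z V E \<beta>\<mu> ^ (\<alpha> - 1) *
              (\<Sum>\<sigma>\<in>spins V. ising_gibbs V E \<beta>\<mu> \<sigma> *
                 (ising_gibbs V E \<beta>\<nu> \<sigma> / ising_gibbs V E \<beta>\<mu> \<sigma> + 1) ^ \<alpha>)
         \<le> 3 ^ \<alpha> * ising_Z V E \<beta>"
proof -
  have "finite V" using assms(7) unfolding regular_graph_def simple_graph_def by simp
  have "0 < (real \<Delta> - 2) / real \<Delta>" using assms(2) by simp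
  then have "0 < \<beta>\<nu>" "0 < \<beta>\<mu>" using assms(3,4) by linarith+
  define a where "a = (\<lambda>\<sigma>. \<beta>\<mu> ^ mono_edges E \<sigma>)"
  define b where "b = (\<lambda>\<sigma>. \<beta>\<nu> ^ mono_edges E \<sigma>)"
  have a_pos: "\<And>\<sigma>. 0 < a \<sigma>" and b_pos: "\<And>\<sigma>. 0 < b \<sigma>"
    unfolding a_def b_def using \<open>0 < \<beta>\<nu>\<close> \<open>0 < \<beta>\<mu>\<close> by simp_all
  have Z_\<beta>: "ising_Z V E \<beta> = (\<Sum>\<sigma>\<in>spins V. a \<sigma> * (b \<sigma> / a \<sigma>) ^ \<alpha>)"
    unfolding ising_Z_def a_def b_def assms(5)
    by (simp add: power_divide power_mult_distrib mult.commute flip: power_mult)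
  have "ising_Z V E \<beta>\<nu> / ising_Z V E \<beta>\<mu> = sum b (spins V) / sum a (spins V)"
    unfolding ising_Z_def a_def b_def ..
  then have middle: "ising_Z V E \<beta>\<nu> ^ \<alpha> / ising_Z V E \<beta>\<mu> ^ (\<alpha> - 1) *
      (\<Sum>\<sigma>\<in>spins V. ising_gibbs V E \<beta>\<mu> \<sigma> *
         (ising_gibbs V E \<beta>\<nu> \<sigma> / ising_gibbs V E \<beta>\<mu> \<sigma> + 1) ^ \<alpha>)
    = (\<Sum>\<sigma>\<in>spins V. a \<sigma> * (b \<sigma> / a \<sigma> + sum b (spins V) / sum a (spins V)) ^ \<alpha>)"
    using ising_scaled_ratio_moment_eq[OF \<open>finite V\<close> _ \<open>0 < \<beta>\<mu>\<close> \<open>0 < \<beta>\<nu>\<close>, of \<alpha> E] assms(1)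
    by (simp add: a_def b_def)
  have "(2::real) ^ \<alpha> \<le> 3 ^ \<alpha>" by (simp add: power_mono)
  moreover have "0 \<le> ising_Z V E \<beta>" unfolding Z_\<beta> using a_pos b_pos by (simp add: sum_nonneg less_imp_le)
  ultimately show ?thesis
    unfolding middle Z_\<beta>
    using ratio_moment_bounds[of "spins V" \<alpha> a b] finite_spins[OF \<open>finite V\<close>] assms(1) a_pos b_pos
    by (force intro: order.trans mult_right_mono simp: less_imp_le)
qed

end
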